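(* Let $\mathcal X$ be a non-empty finite set, $\mathcal A_x$ non-empty finite sets, $\mathcal Z=\{(x,a):x\in\mathcal X,a\in\mathcal A_x\}$, $P(x,a,\cdot)$ probability measures on $\mathcal X$, $S(x,a,y,\cdot)$ probability measures on $\mathbb R$ with finite second moments, and $\gamma\in[0,1)$. For a function $\varepsilon:\mathcal X\to[0,1]$, a function $q:\mathcal Z\to\mathbb R$ and $x\in\mathcal X$, define the probability measure $\pi^\varepsilon_q(x,\cdot)$ on $\mathcal A_x$ by $$\pi^\varepsilon_q(x,a)=\frac{\varepsilon(x)}{|\mathcal A_x|}+\mathbf 1_{\{a\in\arg\max q(x,\cdot)\}}\frac{1-\varepsilon(x)}{|\arg\max q(x,\cdot)|},$$ and define $\mathcal H(\varepsilon,q):\mathcal Z\to\mathbb R$ by $\mathcal H(\varepsilon,q)(x,a)=Q_{\pi^\varepsilon_q}(x,a)$. Then $\mathcal H(\varepsilon,q)(x,a)\le Q^*(x,a)$ for all $(x,a)\in\mathcal Z$ and $$\|\mathcal H(\varepsilon,q)-Q^*\|_\infty\le\frac{\gamma}{1-\gamma}\Big(\|Q^*-q\|_\infty+\|(q-Q^* )_+\|_\infty+2\|Q^*\|_\infty\|\varepsilon\|_\infty\Big),$$ where $(q-Q^* )_+(x,a)=\max\{q(x,a)-Q^*(x,a),0\}$ and $\|\cdot\|_\infty$ denotes the max norm.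
   Context: For an SM policy $\pi$ (a family of probability measures $\pi(x,\cdot)$ on $\mathcal A_x$) and $x\in\mathcal X$: $X_0=x$, $A_t\sim\pi(X_t,\cdot)$, $X_{t+1}\sim P(X_t,A_t,\cdot)$ given the past, and conditionally on the state-action process the rewards $R_{t+1}\sim S(X_t,A_t,X_{t+1},\cdot)$ are independent; $V_\pi(x)=\mathbb E_{x,\pi}[\sum_{t\ge0}\gamma^tR_{t+1}]$. General (history-dependent) policies $\Pi$ are defined analogously with $A_t$ drawn from $\Pi_t(H_t,\cdot)$, $H_t=(X_0,A_0,\dots,X_t)$, and $V^*(x)=\sup_\Pi V_\Pi(x)$. Let $g(x,a,y)=\int z\,S(x,a,y,dz)$, $r(x,a)=\sum_yP(x,a,y)g(x,a,y)$, $Q_\pi(x,a)=r(x,a)+\gamma\sum_yP(x,a,y)V_\pi(y)$ and $Q^*(x,a)=r(x,a)+\gamma\sum_yP(x,a,y)V^*(y)$. *)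

theory Defs
  imports "HOL-Probability.Probability"
begin

definition rmean :: "('x \<Rightarrow> 'a \<Rightarrow> 'x \<Rightarrow> real measure) \<Rightarrow> 'x \<Rightarrow> 'a \<Rightarrow> 'x \<Rightarrow> real" where
  "rmean S x a y = integral\<^sup>L (S x a y) (\<lambda>z. z)"

text \<open>Distribution of (A_0 X_0 ... pairs, current state) i.e. of the history
  H_t = (X_0,A_0,...,X_t), encoded as (list of (X_i,A_i) for i<t, X_t),
  under a general (history-dependent) policy Pol started in x.\<close>
primrec hist_dist ::
  "(('x \<times> 'a) list \<Rightarrow> 'x \<Rightarrow> 'a pmf) \<Rightarrow> ('x \<Rightarrow> 'a \<Rightarrow> 'x pmf) \<Rightarrow> 'x \<Rightarrow> nat
     \<Rightarrow> (('x \<times> 'a) list \<times> 'x) pmf" where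
  "hist_dist Pol P x 0 = return_pmf ([], x)"
| "hist_dist Pol P x (Suc t) =
     bind_pmf (hist_dist Pol P x t) (\<lambda>(h, y). bind_pmf (Pol h y)
        (\<lambda>a. map_pmf (\<lambda>y'. (h @ [(y, a)], y')) (P y a)))"

text \<open>E[R_{t+1}] = E[g(X_t,A_t,X_{t+1})] (rewards are conditionally independent
  with law S(X_t,A_t,X_{t+1},.)).\<close>
definition exp_reward ::
  "(('x \<times> 'a) list \<Rightarrow> 'x \<Rightarrow> 'a pmf) \<Rightarrow> ('x \<Rightarrow> 'a \<Rightarrow> 'x pmf)
     \<Rightarrow> ('x \<Rightarrow> 'a \<Rightarrow> 'x \<Rightarrow> real measure) \<Rightarrow> 'x \<Rightarrow> nat \<Rightarrow> real" where
  "exp_reward Pol P S x t =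
     measure_pmf.expectation (hist_dist Pol P x (Suc t))
       (\<lambda>(h, y'). case last h of (y, a) \<Rightarrow> rmean S y a y')"

text \<open>V_Pi(x) = E_{x,Pol}[sum_t gamma^t R_{t+1}] = sum_t gamma^t E_{x,Pol}[R_{t+1}].\<close>
definition val_hist ::
  "(('x \<times> 'a) list \<Rightarrow> 'x \<Rightarrow> 'a pmf) \<Rightarrow> ('x \<Rightarrow> 'a \<Rightarrow> 'x pmf)
     \<Rightarrow> ('x \<Rightarrow> 'a \<Rightarrow> 'x \<Rightarrow> real measure) \<Rightarrow> real \<Rightarrow> 'x \<Rightarrow> real" where
  "val_hist Pol P S \<gamma> x = (\<Sum>t. \<gamma> ^ t * exp_reward Pol P S x t)"

definition val_sm ::
  "('x \<Rightarrow> 'a pmf) \<Rightarrow> ('x \<Rightarrow> 'a \<Rightarrow> 'x pmf)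
     \<Rightarrow> ('x \<Rightarrow> 'a \<Rightarrow> 'x \<Rightarrow> real measure) \<Rightarrow> real \<Rightarrow> 'x \<Rightarrow> real" where
  "val_sm pol P S \<gamma> x = val_hist (\<lambda>h y. pol y) P S \<gamma> x"

definition hist_policies :: "('x \<Rightarrow> 'a set) \<Rightarrow> (('x \<times> 'a) list \<Rightarrow> 'x \<Rightarrow> 'a pmf) set" where
  "hist_policies A = {Pol. \<forall>h y. set_pmf (Pol h y) \<subseteq> A y}"

definition val_opt ::
  "('x \<Rightarrow> 'a set) \<Rightarrow> ('x \<Rightarrow> 'a \<Rightarrow> 'x pmf)
     \<Rightarrow> ('x \<Rightarrow> 'a \<Rightarrow> 'x \<Rightarrow> real measure) \<Rightarrow> real \<Rightarrow> 'x \<Rightarrow> real" where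
  "val_opt A P S \<gamma> x = (SUP Pol \<in> hist_policies A. val_hist Pol P S \<gamma> x)"

definition rexp :: "('x::finite \<Rightarrow> 'a \<Rightarrow> 'x pmf) \<Rightarrow> ('x \<Rightarrow> 'a \<Rightarrow> 'x \<Rightarrow> real measure) \<Rightarrow> 'x \<Rightarrow> 'a \<Rightarrow> real" where
  "rexp P S x a = (\<Sum>y\<in>UNIV. pmf (P x a) y * rmean S x a y)"

definition Q_sm ::
  "('x::finite \<Rightarrow> 'a pmf) \<Rightarrow> ('x \<Rightarrow> 'a \<Rightarrow> 'x pmf)
     \<Rightarrow> ('x \<Rightarrow> 'a \<Rightarrow> 'x \<Rightarrow> real measure) \<Rightarrow> real \<Rightarrow> 'x \<Rightarrow> 'a \<Rightarrow> real" where
  "Q_sm pol P S \<gamma> x a = rexp P S x a + \<gamma> * (\<Sum>y\<in>UNIV. pmf (P x a) y * val_sm pol P S \<gamma> y)"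

definition Q_opt ::
  "('x::finite \<Rightarrow> 'a set) \<Rightarrow> ('x \<Rightarrow> 'a \<Rightarrow> 'x pmf)
     \<Rightarrow> ('x \<Rightarrow> 'a \<Rightarrow> 'x \<Rightarrow> real measure) \<Rightarrow> real \<Rightarrow> 'x \<Rightarrow> 'a \<Rightarrow> real" where
  "Q_opt A P S \<gamma> x a = rexp P S x a + \<gamma> * (\<Sum>y\<in>UNIV. pmf (P x a) y * val_opt A P S \<gamma> y)"

definition argmax_set :: "('x \<Rightarrow> 'a set) \<Rightarrow> ('x \<Rightarrow> 'a \<Rightarrow> real) \<Rightarrow> 'x \<Rightarrow> 'a set" where
  "argmax_set A q x = {a \<in> A x. \<forall>b \<in> A x. q x b \<le> q x a}"

definition eps_greedy :: "('x \<Rightarrow> 'a set) \<Rightarrow> ('x \<Rightarrow> real) \<Rightarrow> ('x \<Rightarrow> 'a \<Rightarrow> real) \<Rightarrow> 'x \<Rightarrow> 'a pmf" where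
  "eps_greedy A \<epsilon> q x = embed_pmf (\<lambda>a.
      (if a \<in> A x then \<epsilon> x / real (card (A x)) else 0)
    + (if a \<in> argmax_set A q x then (1 - \<epsilon> x) / real (card (argmax_set A q x)) else 0))"

definition H_op ::
  "('x::finite \<Rightarrow> 'a set) \<Rightarrow> ('x \<Rightarrow> 'a \<Rightarrow> 'x pmf) \<Rightarrow> ('x \<Rightarrow> 'a \<Rightarrow> 'x \<Rightarrow> real measure) \<Rightarrow> real
     \<Rightarrow> ('x \<Rightarrow> real) \<Rightarrow> ('x \<Rightarrow> 'a \<Rightarrow> real) \<Rightarrow> 'x \<Rightarrow> 'a \<Rightarrow> real" where
  "H_op A P S \<gamma> \<epsilon> q x a = Q_sm (eps_greedy A \<epsilon> q) P S \<gamma> x a"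

definition supZ :: "('x \<Rightarrow> 'a set) \<Rightarrow> ('x \<Rightarrow> 'a \<Rightarrow> real) \<Rightarrow> real" where
  "supZ A f = Max {\<bar>f x a\<bar> | x a. a \<in> A x}"

end

theory Submission
  imports Defs
begin

(* The eps-greedy policy pi is admissible, so V_pi <= V_opt and hence Q_pi <= Q_opt.  For the
   error, one step of the Bellman equations gives
     V_opt x - V_pi x <= [max_a Q_opt x a - sum_a pi x a * Q_opt x a] + gamma * max_y (V_opt y - V_pi y),
   so D = max_y (V_opt y - V_pi y) satisfies D <= K + gamma * D for any bound K on the bracket;
   thus D <= K / (1 - gamma) and Q_opt - Q_pi = gamma * P (V_opt - V_pi) <= gamma * K / (1 - gamma).
   The bracket is the regret of pi against Q_opt: the uniform part costs at most 2 ||Q_opt|| per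
   unit of eps, and a q-greedy action b loses at most (Q_opt - q) a0 + (q - Q_opt) b against a
   maximiser a0 of Q_opt x, because q x a0 <= q x b. *)

lemma convex_combination_le:
  fixes p g :: "'b \<Rightarrow> real"
  assumes "\<And>i. i \<in> I \<Longrightarrow> 0 \<le> p i" "sum p I = 1" "\<And>i. i \<in> I \<Longrightarrow> g i \<le> B"
  shows "(\<Sum>i\<in>I. p i * g i) \<le> B"
proof -
  have "(\<Sum>i\<in>I. p i * g i) \<le> (\<Sum>i\<in>I. p i * B)"
    using assms by (intro sum_mono mult_left_mono) auto
  also have "\<dots> = B"
    using assms(2) by (simp add: sum_distrib_right[symmetric])
  finally show ?thesis .
qed

lemma abs_convex_combination_le:
  fixes p g :: "'b \<Rightarrow> real"
  assumes "\<And>i. i \<in> I \<Longrightarrow> 0 \<le> p i" "sum p I = 1" "\<And>i. i \<in> I \<Longrightarrow> \<bar>g i\<bar> \<le> B"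
  shows "\<bar>\<Sum>i\<in>I. p i * g i\<bar> \<le> B"
proof -
  have "\<bar>\<Sum>i\<in>I. p i * g i\<bar> \<le> (\<Sum>i\<in>I. \<bar>p i * g i\<bar>)"
    by (rule sum_abs)
  also have "\<dots> = (\<Sum>i\<in>I. p i * \<bar>g i\<bar>)"
    using assms(1) by (intro sum.cong) (auto simp: abs_mult)
  also have "\<dots> \<le> B"
    using assms by (intro convex_combination_le)
  finally show ?thesis .
qed

lemma average_le:
  fixes f :: "'b \<Rightarrow> real"
  assumes "finite I" "I \<noteq> {}" "\<And>i. i \<in> I \<Longrightarrow> f i \<le> K"
  shows "sum f I / card I \<le> K"
  using sum_bounded_above[of I f K] assms by (simp add: pos_divide_le_eq card_gt_0_iff mult.commute)

lemma set_pmf_hist_policy: "Pol \<in> hist_policies A \<Longrightarrow> set_pmf (Pol h y) \<subseteq> A y"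
  unfolding hist_policies_def by blast

lemma hist_policies_Cons: "Pol \<in> hist_policies A \<Longrightarrow> (\<lambda>h. Pol (z # h)) \<in> hist_policies A"
  unfolding hist_policies_def by blast

lemma hist_dist_Suc_first_step:
  "hist_dist Pol P x (Suc t) = bind_pmf (Pol [] x) (\<lambda>a. bind_pmf (P x a) (\<lambda>y.
      map_pmf (\<lambda>(h, z). ((x, a) # h, z)) (hist_dist (\<lambda>h. Pol ((x, a) # h)) P y t)))"
proof (induction t)
  case 0
  then show ?case
    by (simp add: map_pmf_def bind_return_pmf)
next
  case (Suc t)
  show ?case
    by (subst hist_dist.simps, subst Suc)
      (simp add: bind_assoc_pmf map_bind_pmf bind_map_pmf map_pmf_comp case_prod_beta)
qed

lemma length_hist_dist: "(h, y) \<in> set_pmf (hist_dist Pol P x t) \<Longrightarrow> length h = t"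
  by (induction t arbitrary: h y) auto

lemma finite_set_hist_dist:
  fixes P :: "'x::finite \<Rightarrow> 'a \<Rightarrow> 'x pmf"
  assumes pol: "Pol \<in> hist_policies A" and fin: "\<And>x. finite (A x)"
  shows "finite (set_pmf (hist_dist Pol P x t))"
proof (induction t)
  case 0
  then show ?case by simp
next
  case (Suc t)
  have "finite (set_pmf (Pol h y))" for h y
    using finite_subset[OF set_pmf_hist_policy[OF pol] fin] .
  with Suc show ?case
    by auto
qed

lemma expectation_hist_dist_Suc:
  fixes P :: "'x::finite \<Rightarrow> 'a \<Rightarrow> 'x pmf" and f :: "('x \<times> 'a) list \<times> 'x \<Rightarrow> real"
  assumes pol: "Pol \<in> hist_policies A" and fin: "\<And>x. finite (A x)"
  shows "measure_pmf.expectation (hist_dist Pol P x (Suc t)) f =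
    (\<Sum>a\<in>A x. pmf (Pol [] x) a * (\<Sum>y\<in>UNIV. pmf (P x a) y *
       measure_pmf.expectation (hist_dist (\<lambda>h. Pol ((x, a) # h)) P y t)
         (\<lambda>(h, z). f ((x, a) # h, z))))"
  unfolding hist_dist_Suc_first_step
  using set_pmf_hist_policy[OF pol] fin
    finite_set_hist_dist[OF hist_policies_Cons[OF pol] fin]
  by (simp add: pmf_expectation_bind[of "A x"] pmf_expectation_bind[of UNIV]
      split_def del: hist_dist.simps)

definition last_step_reward :: "('x \<Rightarrow> 'a \<Rightarrow> 'x \<Rightarrow> real measure) \<Rightarrow> ('x \<times> 'a) list \<times> 'x \<Rightarrow> real" where
  "last_step_reward S = (\<lambda>(h, y'). case last h of (y, a) \<Rightarrow> rmean S y a y')"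

lemma exp_reward_eq_expectation:
  "exp_reward Pol P S x t = measure_pmf.expectation (hist_dist Pol P x (Suc t)) (last_step_reward S)"
  unfolding exp_reward_def last_step_reward_def ..

lemma exp_reward_0:
  fixes P :: "'x::finite \<Rightarrow> 'a \<Rightarrow> 'x pmf"
  assumes "Pol \<in> hist_policies A" "\<And>x. finite (A x)"
  shows "exp_reward Pol P S x 0 = (\<Sum>a\<in>A x. pmf (Pol [] x) a * rexp P S x a)"
  unfolding exp_reward_eq_expectation expectation_hist_dist_Suc[OF assms]
  by (simp add: last_step_reward_def rexp_def)

lemma exp_reward_Suc:
  fixes P :: "'x::finite \<Rightarrow> 'a \<Rightarrow> 'x pmf"
  assumes "Pol \<in> hist_policies A" "\<And>x. finite (A x)"
  shows "exp_reward Pol P S x (Suc t) = (\<Sum>a\<in>A x. pmf (Pol [] x) a *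
      (\<Sum>y\<in>UNIV. pmf (P x a) y * exp_reward (\<lambda>h. Pol ((x, a) # h)) P S y t))"
proof -
  have "last_step_reward S ((x, a) # h, z) = last_step_reward S (h, z)"
    if "(h, z) \<in> set_pmf (hist_dist Pol' P y (Suc t))" for Pol' a y h z
    using length_hist_dist[OF that] by (auto simp: last_step_reward_def)
  then have "measure_pmf.expectation (hist_dist Pol' P y (Suc t)) (\<lambda>(h, z). last_step_reward S ((x, a) # h, z))
      = measure_pmf.expectation (hist_dist Pol' P y (Suc t)) (last_step_reward S)" for Pol' a y
    by (intro integral_cong_AE) (auto intro!: AE_pmfI simp del: hist_dist.simps)
  then show ?thesis
    unfolding exp_reward_eq_expectation expectation_hist_dist_Suc[OF assms] by simp
qed

lemma abs_exp_reward_le: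
  fixes P :: "'x::finite \<Rightarrow> 'a \<Rightarrow> 'x pmf"
  assumes "Pol \<in> hist_policies A" and fin: "\<And>x. finite (A x)"
    and bound: "\<And>y a y'. a \<in> A y \<Longrightarrow> \<bar>rmean S y a y'\<bar> \<le> B"
  shows "\<bar>exp_reward Pol P S x t\<bar> \<le> B"
  using assms(1)
proof (induction t arbitrary: Pol x)
  case 0
  show ?case
    unfolding exp_reward_0[OF 0 fin] rexp_def
    using set_pmf_hist_policy[OF 0] fin bound
    by (intro abs_convex_combination_le) (auto simp: sum_pmf_eq_1)
next
  case (Suc t)
  show ?case
    unfolding exp_reward_Suc[OF Suc.prems fin]
    using set_pmf_hist_policy[OF Suc.prems] fin Suc.IH[OF hist_policies_Cons[OF Suc.prems]]
    by (intro abs_convex_combination_le) (auto simp: sum_pmf_eq_1)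
qed

lemma Q_opt_minus_Q_sm:
  "Q_opt A P S \<gamma> x a - Q_sm pol P S \<gamma> x a
    = \<gamma> * (\<Sum>y\<in>UNIV. pmf (P x a) y * (val_opt A P S \<gamma> y - val_sm pol P S \<gamma> y))"
  unfolding Q_opt_def Q_sm_def by (simp add: right_diff_distrib sum_subtractf)

locale discounted_mdp =
  fixes A :: "'x::finite \<Rightarrow> 'a set"
    and P :: "'x \<Rightarrow> 'a \<Rightarrow> 'x pmf"
    and S :: "'x \<Rightarrow> 'a \<Rightarrow> 'x \<Rightarrow> real measure"
    and \<gamma> :: real
  assumes finite_A: "finite (A x)"
    and A_nonempty: "A x \<noteq> {}"
    and discount_nonneg: "0 \<le> \<gamma>"
    and discount_less_1: "\<gamma> < 1"
begin

lemma rmean_bounded: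
  obtains B where "\<And>x a y. a \<in> A x \<Longrightarrow> \<bar>rmean S x a y\<bar> \<le> B"
proof -
  have "finite (SIGMA x:UNIV. A x \<times> (UNIV :: 'x set))"
    using finite_A by (intro finite_SigmaI) auto
  then have "bdd_above ((\<lambda>(x, a, y). \<bar>rmean S x a y\<bar>) ` (SIGMA x:UNIV. A x \<times> UNIV))"
    by (intro bdd_above_finite finite_imageI)
  then show ?thesis
    using that by (fastforce simp: bdd_above_def)
qed

lemma summable_discounted_exp_reward:
  assumes "Pol \<in> hist_policies A"
  shows "summable (\<lambda>t. \<gamma> ^ t * exp_reward Pol P S x t)"
proof -
  obtain B where B: "\<And>x a y. a \<in> A x \<Longrightarrow> \<bar>rmean S x a y\<bar> \<le> B"
    using rmean_bounded by blast
  have bound: "norm (\<gamma> ^ t * exp_reward Pol P S x t) \<le> \<gamma> ^ t * B" for t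
    using abs_exp_reward_le[OF assms finite_A B, of P x t] discount_nonneg
    by (simp add: abs_mult mult_left_mono)
  have "summable (\<lambda>t. \<gamma> ^ t * B)"
    using discount_nonneg discount_less_1 by (intro summable_mult2 summable_geometric) auto
  then show ?thesis
    by (rule summable_comparison_test') (rule bound)
qed

lemma bdd_above_val_hist: "bdd_above ((\<lambda>Pol. val_hist Pol P S \<gamma> x) ` hist_policies A)"
proof -
  obtain B where B: "\<And>x a y. a \<in> A x \<Longrightarrow> \<bar>rmean S x a y\<bar> \<le> B"
    using rmean_bounded by blast
  have "val_hist Pol P S \<gamma> x \<le> 1 / (1 - \<gamma>) * B" if pol: "Pol \<in> hist_policies A" for Pol
  proof (rule sums_le)
    show "\<gamma> ^ t * exp_reward Pol P S x t \<le> \<gamma> ^ t * B" for t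
      using abs_exp_reward_le[OF pol finite_A B, of P x t] discount_nonneg
      by (intro mult_left_mono) (auto simp: abs_le_iff)
    show "(\<lambda>t. \<gamma> ^ t * exp_reward Pol P S x t) sums val_hist Pol P S \<gamma> x"
      unfolding val_hist_def by (intro summable_sums summable_discounted_exp_reward pol)
    show "(\<lambda>t. \<gamma> ^ t * B) sums (1 / (1 - \<gamma>) * B)"
      using discount_nonneg discount_less_1 by (intro sums_mult2 geometric_sums) auto
  qed
  then show ?thesis
    by (auto simp: bdd_above_def)
qed

lemma val_hist_first_step:
  assumes pol: "Pol \<in> hist_policies A"
  shows "val_hist Pol P S \<gamma> x = (\<Sum>a\<in>A x. pmf (Pol [] x) a * (rexp P S x a
      + \<gamma> * (\<Sum>y\<in>UNIV. pmf (P x a) y * val_hist (\<lambda>h. Pol ((x, a) # h)) P S \<gamma> y)))"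
proof -
  define w where "w a y = \<gamma> * pmf (Pol [] x) a * pmf (P x a) y" for a y
  define tail where "tail = (\<Sum>a\<in>A x. \<Sum>y\<in>UNIV. w a y * val_hist (\<lambda>h. Pol ((x, a) # h)) P S \<gamma> y)"
  have shifted: "\<gamma> ^ Suc t * exp_reward Pol P S x (Suc t)
      = (\<Sum>a\<in>A x. \<Sum>y\<in>UNIV. w a y * (\<gamma> ^ t * exp_reward (\<lambda>h. Pol ((x, a) # h)) P S y t))" for t
    unfolding exp_reward_Suc[OF pol finite_A] w_def
    by (simp add: sum_distrib_left mult_ac)
  have "(\<lambda>t. \<gamma> ^ Suc t * exp_reward Pol P S x (Suc t)) sums tail"
    unfolding shifted tail_def val_hist_def
    by (intro sums_sum sums_mult summable_sums summable_discounted_exp_reward hist_policies_Cons pol)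
  then have "(\<lambda>t. \<gamma> ^ t * exp_reward Pol P S x t) sums (tail + \<gamma> ^ 0 * exp_reward Pol P S x 0)"
    by (rule sums_Suc_iff[of "\<lambda>t. \<gamma> ^ t * exp_reward Pol P S x t", THEN iffD1])
  then have "val_hist Pol P S \<gamma> x = tail + exp_reward Pol P S x 0"
    unfolding val_hist_def by (simp add: sums_iff)
  then show ?thesis
    unfolding tail_def w_def exp_reward_0[OF pol finite_A]
    by (simp add: sum.distrib distrib_left sum_distrib_left mult_ac)
qed

lemma hist_policies_nonempty: "hist_policies A \<noteq> {}"
proof -
  have "(\<lambda>h y. return_pmf (SOME a. a \<in> A y)) \<in> hist_policies A"
    unfolding hist_policies_def using A_nonempty by (simp add: some_in_eq)
  then show ?thesis
    by blast
qed

lemma val_hist_le_val_opt: "Pol \<in> hist_policies A \<Longrightarrow> val_hist Pol P S \<gamma> x \<le> val_opt A P S \<gamma> x"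
  unfolding val_opt_def by (rule cSUP_upper[OF _ bdd_above_val_hist])

lemma val_opt_le_Max_Q_opt: "val_opt A P S \<gamma> x \<le> Max (Q_opt A P S \<gamma> x ` A x)"
  unfolding val_opt_def
proof (rule cSUP_least[OF hist_policies_nonempty])
  fix Pol
  assume pol: "Pol \<in> hist_policies A"
  have "val_hist Pol P S \<gamma> x \<le> (\<Sum>a\<in>A x. pmf (Pol [] x) a * Q_opt A P S \<gamma> x a)"
    unfolding val_hist_first_step[OF pol] Q_opt_def
    using discount_nonneg
    by (intro sum_mono mult_left_mono add_left_mono val_hist_le_val_opt hist_policies_Cons pol)
      auto
  also have "\<dots> \<le> Max (Q_opt A P S \<gamma> x ` A x)"
    using set_pmf_hist_policy[OF pol] finite_A
    by (intro convex_combination_le) (auto simp: sum_pmf_eq_1)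
  finally show "val_hist Pol P S \<gamma> x \<le> Max (Q_opt A P S \<gamma> x ` A x)" .
qed

lemma val_sm_eq_sum_Q_sm:
  assumes "\<And>x. set_pmf (pol x) \<subseteq> A x"
  shows "val_sm pol P S \<gamma> x = (\<Sum>a\<in>A x. pmf (pol x) a * Q_sm pol P S \<gamma> x a)"
  using assms val_hist_first_step[of "\<lambda>h y. pol y" x]
  by (simp add: val_sm_def Q_sm_def hist_policies_def)

lemma Q_sm_le_Q_opt:
  assumes "\<And>x. set_pmf (pol x) \<subseteq> A x"
  shows "Q_sm pol P S \<gamma> x a \<le> Q_opt A P S \<gamma> x a"
proof -
  have "val_sm pol P S \<gamma> y \<le> val_opt A P S \<gamma> y" for y
    using assms unfolding val_sm_def by (intro val_hist_le_val_opt) (simp add: hist_policies_def)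
  then have "0 \<le> Q_opt A P S \<gamma> x a - Q_sm pol P S \<gamma> x a"
    unfolding Q_opt_minus_Q_sm using discount_nonneg
    by (intro mult_nonneg_nonneg sum_nonneg) auto
  then show ?thesis
    by simp
qed

lemma val_opt_minus_val_sm_le:
  assumes pol: "\<And>x. set_pmf (pol x) \<subseteq> A x"
    and regret: "\<And>x. Max (Q_opt A P S \<gamma> x ` A x)
      - (\<Sum>a\<in>A x. pmf (pol x) a * Q_opt A P S \<gamma> x a) \<le> K"
  shows "val_opt A P S \<gamma> x - val_sm pol P S \<gamma> x \<le> K / (1 - \<gamma>)"
proof -
  define D where "D = Max (range (\<lambda>y. val_opt A P S \<gamma> y - val_sm pol P S \<gamma> y))"
  have D_ge: "val_opt A P S \<gamma> y - val_sm pol P S \<gamma> y \<le> D" for y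
    unfolding D_def by (rule Max_ge) auto
  have "D \<in> range (\<lambda>y. val_opt A P S \<gamma> y - val_sm pol P S \<gamma> y)"
    unfolding D_def by (rule Max_in) auto
  then obtain y0 where y0: "D = val_opt A P S \<gamma> y0 - val_sm pol P S \<gamma> y0"
    by blast
  have Q_gap: "Q_opt A P S \<gamma> y a - Q_sm pol P S \<gamma> y a \<le> \<gamma> * D" for y a
    unfolding Q_opt_minus_Q_sm using discount_nonneg D_ge
    by (intro mult_left_mono convex_combination_le) (auto simp: sum_pmf_eq_1)
  have "val_opt A P S \<gamma> y - val_sm pol P S \<gamma> y \<le> K + \<gamma> * D" for y
  proof -
    have sum1: "(\<Sum>a\<in>A y. pmf (pol y) a) = 1"
      using pol finite_A by (rule sum_pmf_eq_1[rotated])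
    have "val_opt A P S \<gamma> y - val_sm pol P S \<gamma> y
        \<le> (Max (Q_opt A P S \<gamma> y ` A y) - (\<Sum>a\<in>A y. pmf (pol y) a * Q_opt A P S \<gamma> y a))
          + (\<Sum>a\<in>A y. pmf (pol y) a * (Q_opt A P S \<gamma> y a - Q_sm pol P S \<gamma> y a))"
      using val_opt_le_Max_Q_opt[of y] unfolding val_sm_eq_sum_Q_sm[OF pol]
      by (simp add: right_diff_distrib sum_subtractf)
    also have "\<dots> \<le> K + \<gamma> * D"
      using regret[of y] Q_gap sum1 by (intro add_mono convex_combination_le) auto
    finally show ?thesis .
  qed
  from this[of y0] have "(1 - \<gamma>) * D \<le> K"
    unfolding y0[symmetric] by (simp add: algebra_simps)
  then have "D \<le> K / (1 - \<gamma>)"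
    using discount_less_1 by (simp add: pos_le_divide_eq mult.commute)
  then show ?thesis
    using D_ge[of x] by linarith
qed

lemma Q_opt_minus_Q_sm_le:
  assumes pol: "\<And>x. set_pmf (pol x) \<subseteq> A x"
    and regret: "\<And>x. Max (Q_opt A P S \<gamma> x ` A x)
      - (\<Sum>a\<in>A x. pmf (pol x) a * Q_opt A P S \<gamma> x a) \<le> K"
  shows "Q_opt A P S \<gamma> x a - Q_sm pol P S \<gamma> x a \<le> \<gamma> / (1 - \<gamma>) * K"
proof -
  have "Q_opt A P S \<gamma> x a - Q_sm pol P S \<gamma> x a \<le> \<gamma> * (K / (1 - \<gamma>))"
    unfolding Q_opt_minus_Q_sm using discount_nonneg val_opt_minus_val_sm_le[OF pol regret]
    by (intro mult_left_mono convex_combination_le) (auto simp: sum_pmf_eq_1)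
  then show ?thesis
    by simp
qed

end

lemma argmax_set_subset: "argmax_set A q x \<subseteq> A x"
  unfolding argmax_set_def by blast

lemma Max_image_attained:
  fixes f :: "'b \<Rightarrow> 'c::linorder"
  assumes "finite X" "X \<noteq> {}"
  obtains a where "a \<in> X" "f a = Max (f ` X)"
proof -
  have "Max (f ` X) \<in> f ` X"
    using assms by (intro Max_in) auto
  then show ?thesis
    using that by (metis imageE)
qed

lemma argmax_set_nonempty:
  assumes "finite (A x)" "A x \<noteq> {}"
  shows "argmax_set A q x \<noteq> {}"
proof -
  obtain a where a: "a \<in> A x" "q x a = Max (q x ` A x)"
    using Max_image_attained[OF assms] .
  have "q x b \<le> q x a" if "b \<in> A x" for b
    unfolding a(2) using assms(1) that by (intro Max_ge) auto
  then have "a \<in> argmax_set A q x"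
    unfolding argmax_set_def using a(1) by blast
  then show ?thesis
    by blast
qed

definition eps_greedy_weight :: "('x \<Rightarrow> 'a set) \<Rightarrow> ('x \<Rightarrow> real) \<Rightarrow> ('x \<Rightarrow> 'a \<Rightarrow> real) \<Rightarrow> 'x \<Rightarrow> 'a \<Rightarrow> real" where
  "eps_greedy_weight A \<epsilon> q x a =
      (if a \<in> A x then \<epsilon> x / real (card (A x)) else 0)
    + (if a \<in> argmax_set A q x then (1 - \<epsilon> x) / real (card (argmax_set A q x)) else 0)"

lemma sum_eps_greedy_weight:
  assumes "finite (A x)"
  shows "(\<Sum>a\<in>A x. eps_greedy_weight A \<epsilon> q x a * g a)
    = \<epsilon> x * (\<Sum>a\<in>A x. g a) / card (A x)
      + (1 - \<epsilon> x) * (\<Sum>a\<in>argmax_set A q x. g a) / card (argmax_set A q x)"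
proof -
  let ?G = "argmax_set A q x" and ?c = "(1 - \<epsilon> x) / card (argmax_set A q x)"
  have "(\<Sum>a\<in>A x. (if a \<in> ?G then ?c else 0) * g a) = (\<Sum>a\<in>A x. if a \<in> ?G then ?c * g a else 0)"
    by (intro sum.cong) auto
  also have "\<dots> = (\<Sum>a\<in>A x \<inter> ?G. ?c * g a)"
    using assms by (rule sum.inter_restrict[symmetric])
  also have "A x \<inter> ?G = ?G"
    using argmax_set_subset[of A q x] by blast
  finally show ?thesis
    unfolding eps_greedy_weight_def
    by (simp add: distrib_right sum.distrib sum_distrib_left sum_divide_distrib)
qed

lemma pmf_eps_greedy:
  assumes fin: "finite (A x)" and ne: "A x \<noteq> {}" and eps: "0 \<le> \<epsilon> x" "\<epsilon> x \<le> 1"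
  shows "pmf (eps_greedy A \<epsilon> q x) a = eps_greedy_weight A \<epsilon> q x a"
  unfolding eps_greedy_def eps_greedy_weight_def[symmetric]
proof (rule pmf_embed_pmf)
  show nonneg: "0 \<le> eps_greedy_weight A \<epsilon> q x b" for b
    using eps unfolding eps_greedy_weight_def by auto
  have "eps_greedy_weight A \<epsilon> q x b = 0" if "b \<notin> A x" for b
    using that argmax_set_subset[of A q x] unfolding eps_greedy_weight_def by auto
  then have "(\<integral>\<^sup>+b. ennreal (eps_greedy_weight A \<epsilon> q x b) \<partial>count_space UNIV)
      = ennreal (\<Sum>b\<in>A x. eps_greedy_weight A \<epsilon> q x b)"
    using fin nonneg by (subst nn_integral_count_space') (auto intro: sum_ennreal)
  also have "(\<Sum>b\<in>A x. eps_greedy_weight A \<epsilon> q x b) = 1"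
    using sum_eps_greedy_weight[of A x \<epsilon> q "\<lambda>_. 1", OF fin] fin ne argmax_set_nonempty[of A x q, OF fin ne]
      finite_subset[OF argmax_set_subset[of A q x] fin]
    by simp
  finally show "(\<integral>\<^sup>+b. ennreal (eps_greedy_weight A \<epsilon> q x b) \<partial>count_space UNIV) = 1"
    by simp
qed

lemma set_pmf_eps_greedy:
  assumes "finite (A x)" "A x \<noteq> {}" "0 \<le> \<epsilon> x" "\<epsilon> x \<le> 1"
  shows "set_pmf (eps_greedy A \<epsilon> q x) \<subseteq> A x"
  using argmax_set_subset[of A q x]
  by (auto simp: set_pmf_iff pmf_eps_greedy[of A x \<epsilon> q, OF assms] eps_greedy_weight_def split: if_splits)

lemma finite_supZ_range:
  fixes A :: "'x::finite \<Rightarrow> 'a set"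
  assumes "\<And>x. finite (A x)"
  shows "finite {\<bar>f x a\<bar> | x a. a \<in> A x}"
proof -
  have "{\<bar>f x a\<bar> | x a. a \<in> A x} = (\<lambda>(x, a). \<bar>f x a\<bar>) ` (SIGMA x:UNIV. A x)"
    by auto
  then show ?thesis
    using assms by simp
qed

lemma abs_le_supZ:
  fixes A :: "'x::finite \<Rightarrow> 'a set"
  assumes "\<And>x. finite (A x)" "a \<in> A x"
  shows "\<bar>f x a\<bar> \<le> supZ A f"
  unfolding supZ_def using assms(2) by (intro Max_ge finite_supZ_range assms(1)) blast

lemma supZ_le:
  fixes A :: "'x::finite \<Rightarrow> 'a set"
  assumes "\<And>x. finite (A x)" "\<And>x. A x \<noteq> {}" "\<And>x a. a \<in> A x \<Longrightarrow> \<bar>f x a\<bar> \<le> c"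
  shows "supZ A f \<le> c"
  unfolding supZ_def
proof (rule Max.boundedI[OF finite_supZ_range[OF assms(1)]])
  obtain a where "a \<in> A undefined"
    using assms(2) by blast
  then show "{\<bar>f x a\<bar> | x a. a \<in> A x} \<noteq> {}"
    by blast
qed (use assms(3) in blast)

lemma supZ_nonneg:
  fixes A :: "'x::finite \<Rightarrow> 'a set"
  assumes "\<And>x. finite (A x)" "\<And>x. A x \<noteq> {}"
  shows "0 \<le> supZ A f"
proof -
  obtain a where "a \<in> A undefined"
    using assms(2) by blast
  then show ?thesis
    using abs_le_supZ[of A, OF assms(1)] by (meson abs_ge_zero order_trans)
qed

lemma Max_minus_le_2_supZ:
  fixes A :: "'x::finite \<Rightarrow> 'a set"
  assumes fin: "\<And>x. finite (A x)" and ne: "\<And>x. A x \<noteq> {}" and a: "a \<in> A x"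
  shows "Max (Q x ` A x) - Q x a \<le> 2 * supZ A Q"
proof -
  obtain a0 where a0: "a0 \<in> A x" "Q x a0 = Max (Q x ` A x)"
    using Max_image_attained[OF fin ne] .
  show ?thesis
    using abs_le_supZ[of A, OF fin a0(1), of Q] abs_le_supZ[of A, OF fin a, of Q] a0(2) by linarith
qed

lemma Max_minus_greedy_le:
  fixes A :: "'x::finite \<Rightarrow> 'a set"
  assumes fin: "\<And>x. finite (A x)" and ne: "\<And>x. A x \<noteq> {}" and b: "b \<in> argmax_set A q x"
  shows "Max (Q x ` A x) - Q x b
    \<le> supZ A (\<lambda>x a. Q x a - q x a) + supZ A (\<lambda>x a. max (q x a - Q x a) 0)"
proof -
  obtain a0 where a0: "a0 \<in> A x" "Q x a0 = Max (Q x ` A x)"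
    using Max_image_attained[OF fin ne] .
  have "b \<in> A x" "q x a0 \<le> q x b"
    using b a0(1) unfolding argmax_set_def by blast+
  then show ?thesis
    using abs_le_supZ[of A, OF fin a0(1), of "\<lambda>x a. Q x a - q x a"]
      abs_le_supZ[of A, OF fin \<open>b \<in> A x\<close>, of "\<lambda>x a. max (q x a - Q x a) 0"] a0(2)
    by auto
qed

lemma eps_greedy_regret_le:
  fixes A :: "'x::finite \<Rightarrow> 'a set" and Q q :: "'x \<Rightarrow> 'a \<Rightarrow> real"
  assumes fin: "\<And>x. finite (A x)" and ne: "\<And>x. A x \<noteq> {}"
    and eps: "\<And>x. 0 \<le> \<epsilon> x \<and> \<epsilon> x \<le> 1"
  shows "Max (Q x ` A x) - (\<Sum>a\<in>A x. pmf (eps_greedy A \<epsilon> q x) a * Q x a)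
    \<le> supZ A (\<lambda>x a. Q x a - q x a) + supZ A (\<lambda>x a. max (q x a - Q x a) 0)
      + 2 * supZ A Q * Max (range (\<lambda>x. \<bar>\<epsilon> x\<bar>))"
proof -
  define G where "G = argmax_set A q x"
  define M where "M = Max (Q x ` A x)"
  define N where "N = supZ A (\<lambda>x a. Q x a - q x a) + supZ A (\<lambda>x a. max (q x a - Q x a) 0)"
  have G: "finite G" "G \<noteq> {}"
    unfolding G_def using fin ne argmax_set_subset[of A q x] argmax_set_nonempty[of A x q]
    by (auto intro: finite_subset)
  have uniform: "(\<Sum>a\<in>A x. M - Q x a) / card (A x) \<le> 2 * supZ A Q"
    unfolding M_def using fin ne by (intro average_le Max_minus_le_2_supZ)
  have greedy: "(\<Sum>b\<in>G. M - Q x b) / card G \<le> N"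
    using fin ne G unfolding M_def N_def G_def by (intro average_le Max_minus_greedy_le)
  have "\<epsilon> x \<le> Max (range (\<lambda>x. \<bar>\<epsilon> x\<bar>))"
    by (rule order_trans[OF abs_ge_self Max_ge]) auto
  then have "(\<Sum>a\<in>A x. M - Q x a) / card (A x) * \<epsilon> x \<le> 2 * supZ A Q * Max (range (\<lambda>x. \<bar>\<epsilon> x\<bar>))"
    using uniform eps[of x] supZ_nonneg[of A Q, OF fin ne] by (intro mult_mono) auto
  moreover have "(\<Sum>b\<in>G. M - Q x b) / card G * (1 - \<epsilon> x) \<le> N * 1"
    using greedy eps[of x] supZ_nonneg[of A, OF fin ne] unfolding N_def
    by (intro mult_mono) (auto intro: add_nonneg_nonneg)
  moreover have "set_pmf (eps_greedy A \<epsilon> q x) \<subseteq> A x"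
    using fin ne eps by (intro set_pmf_eps_greedy) auto
  then have "M - (\<Sum>a\<in>A x. pmf (eps_greedy A \<epsilon> q x) a * Q x a)
      = (\<Sum>a\<in>A x. pmf (eps_greedy A \<epsilon> q x) a * (M - Q x a))"
    using sum_pmf_eq_1[OF fin]
    by (simp add: right_diff_distrib sum_subtractf flip: sum_distrib_right)
  moreover have "\<dots> = \<epsilon> x * ((\<Sum>a\<in>A x. M - Q x a) / card (A x))
      + (1 - \<epsilon> x) * ((\<Sum>b\<in>G. M - Q x b) / card G)"
    using eps[of x] unfolding G_def
    by (simp add: pmf_eps_greedy[of A x \<epsilon> q, OF fin ne] sum_eps_greedy_weight[of A x, OF fin])
  ultimately show ?thesis
    unfolding M_def N_def by (simp add: mult.commute)
qed

theorem lemma3p1: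
  fixes A :: "'x::finite \<Rightarrow> 'a set"
    and P :: "'x \<Rightarrow> 'a \<Rightarrow> 'x pmf"
    and S :: "'x \<Rightarrow> 'a \<Rightarrow> 'x \<Rightarrow> real measure"
    and \<gamma> :: real
    and \<epsilon> :: "'x \<Rightarrow> real"
    and q :: "'x \<Rightarrow> 'a \<Rightarrow> real"
  assumes A_fin: "\<And>x. finite (A x)"
    and A_ne: "\<And>x. A x \<noteq> {}"
    and S_prob: "\<And>x a y. a \<in> A x \<Longrightarrow> prob_space (S x a y)"
    and S_borel: "\<And>x a y. a \<in> A x \<Longrightarrow> sets (S x a y) = sets borel"
    and S_second_moment: "\<And>x a y. a \<in> A x \<Longrightarrow> integrable (S x a y) (\<lambda>z. z ^ 2)"
    and gamma: "0 \<le> \<gamma>" "\<gamma> < 1"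
    and eps: "\<And>x. 0 \<le> \<epsilon> x \<and> \<epsilon> x \<le> 1"
  shows "(\<forall>x. \<forall>a \<in> A x. H_op A P S \<gamma> \<epsilon> q x a \<le> Q_opt A P S \<gamma> x a)
    \<and> supZ A (\<lambda>x a. H_op A P S \<gamma> \<epsilon> q x a - Q_opt A P S \<gamma> x a)
        \<le> \<gamma> / (1 - \<gamma>) *
          (supZ A (\<lambda>x a. Q_opt A P S \<gamma> x a - q x a)
           + supZ A (\<lambda>x a. max (q x a - Q_opt A P S \<gamma> x a) 0)
           + 2 * supZ A (Q_opt A P S \<gamma>) * Max (range (\<lambda>x. \<bar>\<epsilon> x\<bar>)))"
proof -
  interpret discounted_mdp A P S \<gamma>
    using A_fin A_ne gamma by unfold_locales
  define K where "K = supZ A (\<lambda>x a. Q_opt A P S \<gamma> x a - q x a)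
    + supZ A (\<lambda>x a. max (q x a - Q_opt A P S \<gamma> x a) 0)
    + 2 * supZ A (Q_opt A P S \<gamma>) * Max (range (\<lambda>x. \<bar>\<epsilon> x\<bar>))"
  have pol: "set_pmf (eps_greedy A \<epsilon> q x) \<subseteq> A x" for x
    using A_fin A_ne eps by (intro set_pmf_eps_greedy) auto
  have regret: "Max (Q_opt A P S \<gamma> x ` A x)
      - (\<Sum>a\<in>A x. pmf (eps_greedy A \<epsilon> q x) a * Q_opt A P S \<gamma> x a) \<le> K" for x
    unfolding K_def using A_fin A_ne eps by (rule eps_greedy_regret_le)
  have below: "H_op A P S \<gamma> \<epsilon> q x a \<le> Q_opt A P S \<gamma> x a" for x a
    unfolding H_op_def using pol by (rule Q_sm_le_Q_opt)
  have "\<bar>H_op A P S \<gamma> \<epsilon> q x a - Q_opt A P S \<gamma> x a\<bar> \<le> \<gamma> / (1 - \<gamma>) * K" for x a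
    using below[of x a] Q_opt_minus_Q_sm_le[OF pol regret, of x a] unfolding H_op_def by simp
  then have "supZ A (\<lambda>x a. H_op A P S \<gamma> \<epsilon> q x a - Q_opt A P S \<gamma> x a) \<le> \<gamma> / (1 - \<gamma>) * K"
    using A_fin A_ne by (intro supZ_le)
  with below show ?thesis
    unfolding K_def by blast
qed

end
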